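(* In the setting below, the subgroup $H_M$ contains the commutator subgroup $[G_M,G_M]$, and the quotient $H_M/[G_M,G_M]$ is finite.
   Context: Let $n\ge 1$ and let $M=(m_{ij})\in SL(2n+1,\mathbb Z)$. Assume that $M$ has exactly one real eigenvalue $\alpha$, that $\alpha>0$, $\alpha\neq 1$, that $\alpha$ is a simple eigenvalue, and that the remaining eigenvalues are $\beta_1,\dots,\beta_k,\bar\beta_1,\dots,\bar\beta_k$ with $\mathrm{Im}\,\beta_j>0$. Let $W\subset\mathbb C^{2n+1}$ be the direct sum of the generalized eigenspaces of $M$ for $\beta_1,\dots,\beta_k$ (so $\dim_{\mathbb C}W=n$). Fix a real eigenvector $a=(a^{(1)},\dots,a^{(2n+1)})^\top\in\mathbb R^{2n+1}$ of $M$ for $\alpha$ and a basis $b_1,\dots,b_n$ of $W$, $b_j=(b_j^{(1)},\dots,b_j^{(2n+1)})^\top$, and let $R=(r_{\ell j})\in M_n(\mathbb C)$ be given by $Mb_j=\sum_{\ell=1}^n r_{\ell j}b_\ell$. For $i=1,\dots,2n+1$ put $u_i=(a^{(i)},b_1^{(i)},\dots,b_n^{(i)})^\top\in\mathbb R\times\mathbb C^n$. Let $\mathbb H=\{w\in\mathbb C:\mathrm{Im}\,w>0\}$, and define holomorphic automorphisms of $\mathbb H\times\mathbb C^n$ by $g_0(w,z)=(\alpha w,R^\top z)$ and $g_i(w,z)=(w,z)+u_i$ for $1\le i\le 2n+1$. Let $G_M$ be the group generated by $g_0,\dots,g_{2n+1}$ and $H_M$ the subgroup generated by $g_1,\dots,g_{2n+1}$.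 *)

theory Defs
  imports "Jordan_Normal_Form.Char_Poly" "HOL-Algebra.Generated_Groups" "HOL-Algebra.Bij"
    "HOL-Algebra.Coset"
begin

definition gen_eigenspace :: "complex mat \<Rightarrow> complex \<Rightarrow> complex vec set" where
  "gen_eigenspace A l = {v \<in> carrier_vec (dim_row A).
      \<exists>k::nat. ((A - l \<cdot>\<^sub>m 1\<^sub>m (dim_row A)) ^\<^sub>m k) *\<^sub>v v = 0\<^sub>v (dim_row A)}"

text \<open>Direct sum of the generalized eigenspaces of A for all eigenvalues with positive
  imaginary part: the set of all finite sums of generalized eigenvectors for such eigenvalues.\<close>
definition upper_gen_space :: "complex mat \<Rightarrow> complex vec set" where
  "upper_gen_space A = {finsum_vec TYPE(complex) (dim_row A) f S | S f.
      finite S \<and> S \<subseteq> {b. Im b > 0} \<and> (\<forall>b\<in>S. f b \<in> gen_eigenspace A b)}"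

definition upper_dom :: "nat \<Rightarrow> (complex \<times> complex vec) set" where
  "upper_dom n = {(w, z). Im w > 0 \<and> z \<in> carrier_vec n}"

definition g_zero :: "nat \<Rightarrow> real \<Rightarrow> complex mat \<Rightarrow> (complex \<times> complex vec) \<Rightarrow> (complex \<times> complex vec)" where
  "g_zero n \<alpha> R = restrict (\<lambda>(w, z). (complex_of_real \<alpha> * w, transpose_mat R *\<^sub>v z)) (upper_dom n)"

definition g_trans :: "nat \<Rightarrow> complex \<times> complex vec \<Rightarrow> (complex \<times> complex vec) \<Rightarrow> (complex \<times> complex vec)" where
  "g_trans n u = restrict (\<lambda>(w, z). (w + fst u, z + snd u)) (upper_dom n)"

end

theory Submission
  imports Defs
begin

(*
  Write t(e) for the translation by the period \<Sum>\<^sub>i e\<^sub>i u\<^sub>i of e \<in> \<int>\<^sup>N, so that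
  H\<^sub>M = t(\<int>\<^sup>N).  Since a and B are eigen-data of M, conjugation by g\<^sub>0 acts on
  translations through M\<^sup>T: g\<^sub>0 t(e) g\<^sub>0\<^sup>-\<^sup>1 = t(M\<^sup>T e), and M\<^sup>T permutes \<int>\<^sup>N because det M = 1.
  Hence every element of G\<^sub>M has the form t g\<^sub>0\<^sup>k with t \<in> H\<^sub>M, the exponent k is additive,
  and all commutators have exponent 0, i.e. lie in H\<^sub>M.  Conversely the commutator of g\<^sub>0
  and t(e) is t((M - 1)\<^sup>T e).  As \<alpha> \<noteq> 1 is the only real eigenvalue, 1 is not an eigenvalue
  and (M - 1)\<^sup>T \<int>\<^sup>N is a sublattice of finite index |det (M - 1)|, so its image under t,
  which lies in [G\<^sub>M, G\<^sub>M], has finite index in H\<^sub>M.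
*)

section \<open>Linear algebra\<close>

lemma finite_int_vecs_abs_less: "finite {r \<in> carrier_vec N. \<forall>i<N. \<bar>r $ i\<bar> < (b::int)}"
proof (rule finite_subset)
  show "{r \<in> carrier_vec N. \<forall>i<N. \<bar>r $ i\<bar> < b} \<subseteq> vec N ` (PiE {..<N} (\<lambda>_. {- b..b}))"
  proof clarify
    fix r :: "int vec" assume r: "r \<in> carrier_vec N" "\<forall>i<N. \<bar>r $ i\<bar> < b"
    have "r = vec N (restrict (\<lambda>i. r $ i) {..<N})" using r by (intro eq_vecI) auto
    moreover have "restrict (\<lambda>i. r $ i) {..<N} \<in> PiE {..<N} (\<lambda>_. {- b..b})"
      using r by (force simp: abs_less_iff)
    ultimately show "r \<in> vec N ` (PiE {..<N} (\<lambda>_. {- b..b}))" by blast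
  qed
  show "finite (vec N ` (PiE {..<N} (\<lambda>_. {- b..b})))"
    by (intro finite_imageI finite_PiE) auto
qed

text \<open>Division with remainder by the lattice \<open>D \<int>\<^sup>N\<close>: since \<open>D (adj D) = det D \<cdot> 1\<close>, the
  lattice contains \<open>det D \<cdot> \<int>\<^sup>N\<close>, so reducing the coordinates modulo \<open>det D\<close> suffices.\<close>
lemma int_vec_mod_lattice:
  fixes D :: "int mat"
  assumes D: "D \<in> carrier_mat N N" "det D \<noteq> 0" and e: "e \<in> carrier_vec N"
  obtains q r where "q \<in> carrier_vec N" "r \<in> carrier_vec N" "\<forall>i<N. \<bar>r $ i\<bar> < \<bar>det D\<bar>"
    "e = D *\<^sub>v q + r"
proof
  define q0 where "q0 = vec N (\<lambda>i. e $ i div det D)"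
  define r where "r = vec N (\<lambda>i. e $ i mod det D)"
  have adj: "adj_mat D \<in> carrier_mat N N" "D * adj_mat D = det D \<cdot>\<^sub>m 1\<^sub>m N"
    using adj_mat[OF D(1)] by auto
  have "D *\<^sub>v (adj_mat D *\<^sub>v q0) = (D * adj_mat D) *\<^sub>v q0"
    using D adj by (intro assoc_mult_mat_vec[symmetric, of _ N N _ N]) (auto simp: q0_def)
  also have "\<dots> = det D \<cdot>\<^sub>v q0" unfolding adj(2) by (intro eq_vecI) (auto simp: q0_def)
  finally show "e = D *\<^sub>v (adj_mat D *\<^sub>v q0) + r"
    using e by (intro eq_vecI) (auto simp: q0_def r_def)
  show "adj_mat D *\<^sub>v q0 \<in> carrier_vec N" using adj(1) by (simp add: q0_def)
  show "r \<in> carrier_vec N" by (simp add: r_def)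
  show "\<forall>i<N. \<bar>r $ i\<bar> < \<bar>det D\<bar>" using D(2) by (simp add: r_def abs_mod_less)
qed

lemma det_sub_one_nonzero:
  fixes A :: "int mat"
  assumes A: "A \<in> carrier_mat N N" and not_eig: "\<not> eigenvalue (map_mat complex_of_int A) 1"
  shows "det (A - 1\<^sub>m N) \<noteq> 0"
proof -
  let ?Ac = "map_mat complex_of_int A"
  have Ac: "?Ac \<in> carrier_mat N N" using A by simp
  have "det (char_matrix ?Ac 1) \<noteq> 0"
    using not_eig unfolding eigenvalue_det[OF Ac] .
  moreover have "char_matrix ?Ac 1 = map_mat complex_of_int (A - 1\<^sub>m N)"
    using A by (intro eq_matI) (auto simp: char_matrix_def)
  ultimately show ?thesis by (simp add: of_int_hom.hom_det)
qed

lemma det_nonzero_if_intertwined: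
  fixes A B R :: "'a::idom mat"
  assumes A: "A \<in> carrier_mat N N" "det A \<noteq> 0" and B: "B \<in> carrier_mat N n"
    and B_inj: "\<And>c. c \<in> carrier_vec n \<Longrightarrow> B *\<^sub>v c = 0\<^sub>v N \<Longrightarrow> c = 0\<^sub>v n"
    and R: "R \<in> carrier_mat n n" and AB: "A * B = B * R"
  shows "det R \<noteq> 0"
proof
  assume "det R = 0"
  then obtain v where v: "v \<in> carrier_vec n" "v \<noteq> 0\<^sub>v n" "R *\<^sub>v v = 0\<^sub>v n"
    using det_0_iff_vec_prod_zero[OF R] by blast
  have Bv: "B *\<^sub>v v \<in> carrier_vec N" using B v(1) by simp
  have "A *\<^sub>v (B *\<^sub>v v) = (A * B) *\<^sub>v v"
    using A B v by (simp add: assoc_mult_mat_vec[of _ N N _ n])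
  also have "\<dots> = B *\<^sub>v (R *\<^sub>v v)"
    unfolding AB using B R v by (simp add: assoc_mult_mat_vec[of _ N n _ n])
  also have "\<dots> = 0\<^sub>v N" unfolding v(3) using B by (intro eq_vecI) auto
  finally have "B *\<^sub>v v = 0\<^sub>v N"
    using det_0_iff_vec_prod_zero[OF A(1)] A(2) Bv by blast
  then show False using B_inj v by blast
qed

section \<open>Extending a subgroup by a normalizing element\<close>

lemma (in group) mem_r_coset_iff: "x \<in> H #> a \<longleftrightarrow> (\<exists>h\<in>H. x = h \<otimes> a)"
  unfolding r_coset_def by blast

lemma (in group) inv_cancel_left:
  "x \<in> carrier G \<Longrightarrow> y \<in> carrier G \<Longrightarrow> inv x \<otimes> (x \<otimes> y) = y"
  by (simp add: m_assoc[symmetric])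

locale normalizing_element = group +
  fixes T g
  assumes subgroup_T: "subgroup T G" and g_carrier: "g \<in> carrier G"
    and conj_closed: "\<And>t. t \<in> T \<Longrightarrow> g \<otimes> t \<otimes> inv g \<in> T"
    and inv_conj_closed: "\<And>t. t \<in> T \<Longrightarrow> inv g \<otimes> t \<otimes> g \<in> T"
begin

lemma T_carrier: "T \<subseteq> carrier G"
  using subgroup_T by (rule subgroup.subset)

definition normalizing_set :: "'a set" where
  "normalizing_set = {x \<in> carrier G. \<forall>t\<in>T. x \<otimes> t \<otimes> inv x \<in> T \<and> inv x \<otimes> t \<otimes> x \<in> T}"

lemma normalizing_set_subgroup: "subgroup normalizing_set G"
proof (rule subgroupI)
  show "normalizing_set \<subseteq> carrier G" unfolding normalizing_set_def by blast
  have "\<one> \<in> normalizing_set"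
    using T_carrier unfolding normalizing_set_def by auto
  then show "normalizing_set \<noteq> {}" by blast
  show "inv x \<in> normalizing_set" if "x \<in> normalizing_set" for x
    using that unfolding normalizing_set_def by simp
  show "x \<otimes> y \<in> normalizing_set" if x: "x \<in> normalizing_set" and y: "y \<in> normalizing_set" for x y
  proof -
    have xy: "x \<in> carrier G" "y \<in> carrier G" using x y unfolding normalizing_set_def by auto
    have "x \<otimes> y \<otimes> t \<otimes> inv (x \<otimes> y) = x \<otimes> (y \<otimes> t \<otimes> inv y) \<otimes> inv x"
      "inv (x \<otimes> y) \<otimes> t \<otimes> (x \<otimes> y) = inv y \<otimes> (inv x \<otimes> t \<otimes> x) \<otimes> y" if "t \<in> T" for t
      using that T_carrier xy by (auto simp: m_assoc inv_mult_group)
    then show ?thesis using x y xy unfolding normalizing_set_def by auto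
  qed
qed

lemma int_pow_conj_closed:
  assumes t: "t \<in> T"
  shows "g [^] (k::int) \<otimes> t \<otimes> inv (g [^] k) \<in> T"
proof -
  have "g \<in> normalizing_set"
    unfolding normalizing_set_def using g_carrier conj_closed inv_conj_closed by blast
  then have "g [^] k \<in> normalizing_set"
    by (rule subgroup_int_pow_closed[OF normalizing_set_subgroup])
  then show ?thesis using t unfolding normalizing_set_def by blast
qed

lemma rcoset_int_pow_mult:
  assumes "x \<in> T #> g [^] (k::int)" "y \<in> T #> g [^] (l::int)"
  shows "x \<otimes> y \<in> T #> g [^] (k + l)"
proof -
  obtain t s where ts: "t \<in> T" "s \<in> T" "x = t \<otimes> g [^] k" "y = s \<otimes> g [^] l"
    using assms unfolding mem_r_coset_iff by blast
  have "t \<in> carrier G" "s \<in> carrier G" using ts(1,2) T_carrier by auto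
  then have "x \<otimes> y = t \<otimes> (g [^] k \<otimes> s \<otimes> inv (g [^] k)) \<otimes> g [^] (k + l)"
    using ts(3,4) g_carrier by (simp add: m_assoc int_pow_mult inv_cancel_left)
  moreover have "t \<otimes> (g [^] k \<otimes> s \<otimes> inv (g [^] k)) \<in> T"
    by (rule subgroup.m_closed[OF subgroup_T ts(1) int_pow_conj_closed[OF ts(2)]])
  ultimately show ?thesis unfolding mem_r_coset_iff by blast
qed

lemma rcoset_int_pow_inv:
  assumes "x \<in> T #> g [^] (k::int)"
  shows "inv x \<in> T #> g [^] (- k)"
proof -
  obtain t where t: "t \<in> T" "x = t \<otimes> g [^] k"
    using assms unfolding mem_r_coset_iff by blast
  have "t \<in> carrier G" using t(1) T_carrier by auto
  then have "inv x = (g [^] (- k) \<otimes> inv t \<otimes> inv (g [^] (- k))) \<otimes> g [^] (- k)"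
    using t(2) g_carrier by (simp add: m_assoc int_pow_neg inv_mult_group)
  moreover have "g [^] (- k) \<otimes> inv t \<otimes> inv (g [^] (- k)) \<in> T"
    by (rule int_pow_conj_closed[OF subgroup.m_inv_closed[OF subgroup_T t(1)]])
  ultimately show ?thesis unfolding mem_r_coset_iff by blast
qed

lemma generate_insert_subset_rcosets:
  "generate G (insert g T) \<subseteq> (\<Union>k. T #> g [^] (k::int))"
proof
  have T_rcoset: "T #> g [^] (0::int) = T" using T_carrier by simp
  have generator: "h \<in> (\<Union>k. T #> g [^] (k::int))" if "h \<in> insert g T" for h
  proof (cases "h = g")
    case True
    have "g \<in> T #> g [^] (1::int)"
      using g_carrier subgroup.one_closed[OF subgroup_T] unfolding mem_r_coset_iff by force
    then show ?thesis using True by blast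
  next
    case False
    then show ?thesis using that T_rcoset by blast
  qed
  fix x assume "x \<in> generate G (insert g T)"
  then show "x \<in> (\<Union>k. T #> g [^] (k::int))"
  proof (induction rule: generate.induct)
    case one
    then show ?case using subgroup.one_closed[OF subgroup_T] T_rcoset by blast
  next
    case (incl h)
    then show ?case by (rule generator)
  next
    case (inv h)
    then show ?case using generator rcoset_int_pow_inv by blast
  next
    case (eng h1 h2)
    then show ?case using rcoset_int_pow_mult by blast
  qed
qed

lemma derived_generate_insert_subset: "derived G (generate G (insert g T)) \<subseteq> T"
proof -
  have "derived_set G (generate G (insert g T)) \<subseteq> T"
  proof clarify
    fix x y assume "x \<in> generate G (insert g T)" "y \<in> generate G (insert g T)"
    then obtain k l :: int where "x \<in> T #> g [^] k" "y \<in> T #> g [^] l"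
      using generate_insert_subset_rcosets by blast
    then have "x \<otimes> y \<otimes> inv x \<otimes> inv y \<in> T #> g [^] (k + l + - k + - l)"
      by (intro rcoset_int_pow_mult rcoset_int_pow_inv)
    then show "x \<otimes> y \<otimes> inv x \<otimes> inv y \<in> T" using T_carrier by simp
  qed
  then show ?thesis
    unfolding derived_def by (rule generate_subgroup_incl[OF _ subgroup_T])
qed

end

section \<open>Homomorphic images of \<open>\<int>\<^sup>N\<close>\<close>

locale int_vec_hom = group G for G (structure) +
  fixes N :: nat and h :: "int vec \<Rightarrow> 'a"
  assumes hom_closed: "e \<in> carrier_vec N \<Longrightarrow> h e \<in> carrier G"
    and hom_add: "e \<in> carrier_vec N \<Longrightarrow> f \<in> carrier_vec N \<Longrightarrow> h (e + f) = h e \<otimes> h f"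
begin

lemma hom_zero: "h (0\<^sub>v N) = \<one>"
  using hom_add[of "0\<^sub>v N" "0\<^sub>v N"] hom_closed[of "0\<^sub>v N"] by simp

lemma hom_uminus: "e \<in> carrier_vec N \<Longrightarrow> h (- e) = inv (h e)"
  using hom_add[of "- e" e] hom_zero hom_closed[of e] hom_closed[of "- e"]
  by (intro inv_equality[symmetric]) auto

lemma hom_smult:
  assumes e: "e \<in> carrier_vec N"
  shows "h (k \<cdot>\<^sub>v e) = h e [^] (k::int)"
proof (induction k rule: int_induct[where k = 0])
  case base
  have "0 \<cdot>\<^sub>v e = 0\<^sub>v N" using e by (intro eq_vecI) auto
  then show ?case by (simp add: hom_zero)
next
  case (step1 j)
  have "(j + 1) \<cdot>\<^sub>v e = j \<cdot>\<^sub>v e + e" using e by (intro eq_vecI) (auto simp: algebra_simps)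
  then have "h ((j + 1) \<cdot>\<^sub>v e) = h e [^] j \<otimes> h e"
    using e step1(2) by (simp add: hom_add)
  then show ?case using e hom_closed by (simp add: int_pow_mult)
next
  case (step2 j)
  have "(j - 1) \<cdot>\<^sub>v e = j \<cdot>\<^sub>v e + - e" using e by (intro eq_vecI) (auto simp: algebra_simps)
  then have "h ((j - 1) \<cdot>\<^sub>v e) = h e [^] j \<otimes> inv (h e)"
    using e step2(2) by (simp add: hom_add hom_uminus)
  also have "\<dots> = h e [^] (j + - 1)"
    using e hom_closed by (simp only: int_pow_mult int_pow_neg int_pow_1)
  finally show ?case by (simp only: diff_conv_add_uminus)
qed

lemma image_subgroup: "subgroup (h ` carrier_vec N) G"
proof (rule subgroupI)
  show "h ` carrier_vec N \<subseteq> carrier G" using hom_closed by (rule image_subsetI)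
  show "h ` carrier_vec N \<noteq> {}" using zero_carrier_vec by (metis empty_iff imageI)
  show "inv a \<in> h ` carrier_vec N" if a: "a \<in> h ` carrier_vec N" for a
  proof -
    obtain e where "a = h e" "e \<in> carrier_vec N" using a by (rule imageE)
    then show ?thesis by (intro image_eqI[of _ h "- e"]) (simp_all add: hom_uminus)
  qed
  show "a \<otimes> b \<in> h ` carrier_vec N" if a: "a \<in> h ` carrier_vec N" and b: "b \<in> h ` carrier_vec N" for a b
  proof -
    obtain e f where "a = h e" "e \<in> carrier_vec N" "b = h f" "f \<in> carrier_vec N"
      using a b by (meson imageE)
    then show ?thesis by (intro image_eqI[of _ h "e + f"]) (simp_all add: hom_add)
  qed
qed

lemma image_eq_generate_unit_vecs:
  "h ` carrier_vec N = generate G ((\<lambda>i. h (unit_vec N i)) ` {..<N})"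
proof
  let ?H = "generate G ((\<lambda>i. h (unit_vec N i)) ` {..<N})"
  have H: "subgroup ?H G" using hom_closed by (intro generate_is_subgroup) auto
  define trunc where "trunc e m = vec N (\<lambda>i. if i < m then e $ i else 0)" for e :: "int vec" and m
  have "h (trunc e m) \<in> ?H" if e: "e \<in> carrier_vec N" and "m \<le> N" for e m
    using \<open>m \<le> N\<close>
  proof (induction m)
    case 0
    have "trunc e 0 = 0\<^sub>v N" by (intro eq_vecI) (auto simp: trunc_def)
    then show ?case using subgroup.one_closed[OF H] by (simp add: hom_zero)
  next
    case (Suc m)
    have "trunc e (Suc m) = trunc e m + (e $ m) \<cdot>\<^sub>v unit_vec N m"
      using Suc.prems by (intro eq_vecI) (auto simp: trunc_def less_Suc_eq)
    then have "h (trunc e (Suc m)) = h (trunc e m) \<otimes> h (unit_vec N m) [^] (e $ m)"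
      using hom_add hom_smult by (simp add: trunc_def)
    moreover have "h (unit_vec N m) \<in> ?H" using Suc.prems by (intro generate.incl) auto
    ultimately show ?case
      using Suc subgroup_int_pow_closed[OF H] subgroup.m_closed[OF H] by simp
  qed
  moreover have "trunc e N = e" if "e \<in> carrier_vec N" for e
    using that by (intro eq_vecI) (auto simp: trunc_def)
  ultimately show "h ` carrier_vec N \<subseteq> ?H" by (metis image_subsetI order_refl)
  show "?H \<subseteq> h ` carrier_vec N" by (intro generate_subgroup_incl image_subgroup) auto
qed

lemma finite_rcosets_in_image:
  assumes K: "subgroup K G" and D: "D \<in> carrier_mat N N" "det D \<noteq> 0"
    and DK: "\<And>e. e \<in> carrier_vec N \<Longrightarrow> h (D *\<^sub>v e) \<in> K"
  shows "finite (rcosets\<^bsub>G\<lparr>carrier := h ` carrier_vec N\<rparr>\<^esub> K)"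
proof (rule finite_subset)
  let ?Box = "{r \<in> carrier_vec N. \<forall>i<N. \<bar>r $ i\<bar> < \<bar>det D\<bar>}"
  show "rcosets\<^bsub>G\<lparr>carrier := h ` carrier_vec N\<rparr>\<^esub> K \<subseteq> (\<lambda>r. K #> h r) ` ?Box"
  proof
    fix C assume "C \<in> rcosets\<^bsub>G\<lparr>carrier := h ` carrier_vec N\<rparr>\<^esub> K"
    then obtain e where e: "e \<in> carrier_vec N" "C = K #> h e"
      unfolding RCOSETS_def r_coset_def by auto
    obtain q r where qr: "q \<in> carrier_vec N" "r \<in> carrier_vec N" "\<forall>i<N. \<bar>r $ i\<bar> < \<bar>det D\<bar>"
      "e = D *\<^sub>v q + r"
      by (rule int_vec_mod_lattice[OF D e(1)])
    have Dq: "D *\<^sub>v q \<in> carrier_vec N" using D qr by simp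
    have "K #> h e = (K #> h (D *\<^sub>v q)) #> h r"
      using qr Dq hom_closed subgroup.subset[OF K] by (simp add: hom_add coset_mult_assoc)
    also have "K #> h (D *\<^sub>v q) = K"
      using Dq DK[OF qr(1)] hom_closed K by (intro coset_join2) auto
    finally show "C \<in> (\<lambda>r. K #> h r) ` ?Box" using e qr by auto
  qed
  show "finite ((\<lambda>r. K #> h r) ` ?Box)" using finite_int_vecs_abs_less by (rule finite_imageI)
qed

end

section \<open>Translations and the map \<open>g\<^sub>0\<close>\<close>

lemma g_trans_in_Bij:
  assumes "Im c = 0" "d \<in> carrier_vec n"
  shows "g_trans n (c, d) \<in> Bij (upper_dom n)"
proof -
  have "bij_betw (g_trans n (c, d)) (upper_dom n) (upper_dom n)"
    by (rule bij_betw_byWitness[where f' = "\<lambda>(w, z). (w - c, z - d)"])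
      (use assms in \<open>auto simp: g_trans_def upper_dom_def\<close>)
  then show ?thesis by (simp add: Bij_def g_trans_def)
qed

lemma g_trans_mult:
  assumes "Im c = 0" "Im c' = 0" "d \<in> carrier_vec n" "d' \<in> carrier_vec n"
  shows "g_trans n (c, d) \<otimes>\<^bsub>BijGroup (upper_dom n)\<^esub> g_trans n (c', d') = g_trans n (c + c', d + d')"
  using assms g_trans_in_Bij[of c d n] g_trans_in_Bij[of c' d' n]
  by (auto simp: BijGroup_def compose_def g_trans_def upper_dom_def fun_eq_iff)

lemma g_zero_in_Bij:
  assumes \<alpha>: "\<alpha> > 0" and R: "R \<in> carrier_mat n n" "det R \<noteq> 0"
  shows "g_zero n \<alpha> R \<in> Bij (upper_dom n)"
proof -
  have "transpose_mat R \<in> Units (ring_mat TYPE(complex) n ())"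
    using R by (intro det_non_zero_imp_unit) (auto simp: det_transpose)
  then obtain Ri where Ri: "Ri \<in> carrier_mat n n"
    "Ri * transpose_mat R = 1\<^sub>m n" "transpose_mat R * Ri = 1\<^sub>m n"
    by (auto simp: Units_def ring_mat_def)
  have "bij_betw (g_zero n \<alpha> R) (upper_dom n) (upper_dom n)"
  proof (rule bij_betw_byWitness[where f' = "\<lambda>(w, z). (w / complex_of_real \<alpha>, Ri *\<^sub>v z)"])
    have "Ri *\<^sub>v (transpose_mat R *\<^sub>v z) = z" "transpose_mat R *\<^sub>v (Ri *\<^sub>v z) = z"
      if "z \<in> carrier_vec n" for z
      using that R Ri by (simp_all add: assoc_mult_mat_vec[symmetric, of _ n n _ n])
    then show "\<forall>x\<in>upper_dom n. (\<lambda>(w, z). (w / complex_of_real \<alpha>, Ri *\<^sub>v z)) (g_zero n \<alpha> R x) = x"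
      "\<forall>x\<in>upper_dom n. g_zero n \<alpha> R ((\<lambda>(w, z). (w / complex_of_real \<alpha>, Ri *\<^sub>v z)) x) = x"
      using \<alpha> R Ri by (auto simp: g_zero_def upper_dom_def)
    show "g_zero n \<alpha> R ` upper_dom n \<subseteq> upper_dom n"
      "(\<lambda>(w, z). (w / complex_of_real \<alpha>, Ri *\<^sub>v z)) ` upper_dom n \<subseteq> upper_dom n"
      using \<alpha> R Ri by (auto simp: g_zero_def upper_dom_def)
  qed
  then show ?thesis by (simp add: Bij_def g_zero_def)
qed

lemma g_zero_mult_g_trans:
  assumes \<alpha>: "\<alpha> > 0" and R: "R \<in> carrier_mat n n" "det R \<noteq> 0"
    and c: "Im c = 0" and d: "d \<in> carrier_vec n"
  shows "g_zero n \<alpha> R \<otimes>\<^bsub>BijGroup (upper_dom n)\<^esub> g_trans n (c, d) =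
    g_trans n (complex_of_real \<alpha> * c, transpose_mat R *\<^sub>v d) \<otimes>\<^bsub>BijGroup (upper_dom n)\<^esub> g_zero n \<alpha> R"
proof -
  have "compose (upper_dom n) (g_zero n \<alpha> R) (g_trans n (c, d)) (w, z) =
    compose (upper_dom n) (g_trans n (complex_of_real \<alpha> * c, transpose_mat R *\<^sub>v d)) (g_zero n \<alpha> R) (w, z)"
    for w z
    using \<alpha> R c d
    by (auto simp: compose_def g_trans_def g_zero_def upper_dom_def distrib_left
        mult_add_distrib_mat_vec[of _ n n])
  then show ?thesis
    using g_zero_in_Bij[OF assms(1-3)] g_trans_in_Bij[OF c d] c d R
    by (auto simp: BijGroup_def fun_eq_iff intro!: g_trans_in_Bij)
qed

locale lattice_translations =
  fixes n N :: nat and M :: "int mat" and \<alpha> :: real and a :: "real vec" and B R :: "complex mat"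
  assumes M_carrier: "M \<in> carrier_mat N N" and M_det: "det M = 1"
    and \<alpha>_pos: "\<alpha> > 0"
    and a_carrier: "a \<in> carrier_vec N" and a_eig: "map_mat real_of_int M *\<^sub>v a = \<alpha> \<cdot>\<^sub>v a"
    and B_carrier: "B \<in> carrier_mat N n"
    and R_carrier: "R \<in> carrier_mat n n" and R_det: "det R \<noteq> 0"
    and intertwining: "map_mat complex_of_int M * B = B * R"
begin

abbreviation BG where "BG \<equiv> BijGroup (upper_dom n)"

abbreviation g0 where "g0 \<equiv> g_zero n \<alpha> R"

text \<open>\<open>period e = \<Sum>\<^sub>i e\<^sub>i u\<^sub>i\<close> with \<open>u\<^sub>i = (a\<^sub>i, (B\<^sub>i\<^sub>j)\<^sub>j)\<close>, so that
  \<open>lattice_trans (unit_vec N i)\<close> is the generator \<open>g\<^sub>i\<close> of the paper.\<close>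
definition period :: "int vec \<Rightarrow> complex \<times> complex vec" where
  "period e = (complex_of_real (a \<bullet> map_vec real_of_int e), transpose_mat B *\<^sub>v map_vec complex_of_int e)"

definition lattice_trans :: "int vec \<Rightarrow> complex \<times> complex vec \<Rightarrow> complex \<times> complex vec" where
  "lattice_trans e = g_trans n (period e)"

lemma period_components: "Im (fst (period e)) = 0" "snd (period e) \<in> carrier_vec n"
proof -
  show "Im (fst (period e)) = 0" by (simp add: period_def)
  show "snd (period e) \<in> carrier_vec n"
    unfolding period_def snd_conv using B_carrier by (intro carrier_vecI) simp
qed

lemma lattice_trans_carrier: "lattice_trans e \<in> carrier BG"
  using period_components[of e] g_trans_in_Bij
  by (cases "period e") (simp add: lattice_trans_def BijGroup_def)

lemma period_add:
  assumes "e \<in> carrier_vec N" "f \<in> carrier_vec N"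
  shows "period (e + f) = (fst (period e) + fst (period f), snd (period e) + snd (period f))"
proof -
  have "map_vec real_of_int (e + f) = map_vec real_of_int e + map_vec real_of_int f"
    "map_vec complex_of_int (e + f) = map_vec complex_of_int e + map_vec complex_of_int f"
    using assms by (auto intro!: eq_vecI)
  then show ?thesis
    using assms a_carrier B_carrier
    by (simp add: period_def scalar_prod_add_distrib[of _ N] mult_add_distrib_mat_vec[of _ n N])
qed

sublocale lattice_hom: int_vec_hom BG N lattice_trans
proof (intro int_vec_hom.intro int_vec_hom_axioms.intro group_BijGroup)
  show "lattice_trans e \<in> carrier BG" for e by (rule lattice_trans_carrier)
  show "lattice_trans (e + f) = lattice_trans e \<otimes>\<^bsub>BG\<^esub> lattice_trans f"
    if "e \<in> carrier_vec N" "f \<in> carrier_vec N" for e f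
    using period_add[OF that] period_components[of e] period_components[of f]
    by (cases "period e", cases "period f") (simp add: lattice_trans_def g_trans_mult)
qed

lemma period_transpose:
  assumes e: "e \<in> carrier_vec N"
  shows "period (transpose_mat M *\<^sub>v e) =
    (complex_of_real \<alpha> * fst (period e), transpose_mat R *\<^sub>v snd (period e))"
proof -
  let ?Mr = "map_mat real_of_int M" and ?Mc = "map_mat complex_of_int M"
  let ?er = "map_vec real_of_int e" and ?ec = "map_vec complex_of_int e"
  have hom_r: "map_vec real_of_int (transpose_mat M *\<^sub>v e) = transpose_mat ?Mr *\<^sub>v ?er"
    unfolding map_mat_transpose using M_carrier e by (intro of_int_hom.mult_mat_vec_hom[of _ N N]) auto
  have hom_c: "map_vec complex_of_int (transpose_mat M *\<^sub>v e) = transpose_mat ?Mc *\<^sub>v ?ec"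
    unfolding map_mat_transpose using M_carrier e by (intro of_int_hom.mult_mat_vec_hom[of _ N N]) auto
  have "a \<bullet> (transpose_mat ?Mr *\<^sub>v ?er) = (transpose_mat ?Mr *\<^sub>v ?er) \<bullet> a"
    using M_carrier e a_carrier by (intro comm_scalar_prod[of _ N]) auto
  also have "\<dots> = ?er \<bullet> (?Mr *\<^sub>v a)"
    using M_carrier e a_carrier by (intro transpose_vec_mult_scalar[of _ N N]) auto
  also have "\<dots> = \<alpha> * (a \<bullet> ?er)"
    unfolding a_eig using e a_carrier by (simp add: comm_scalar_prod[of a N])
  finally have fst_eq: "a \<bullet> (transpose_mat ?Mr *\<^sub>v ?er) = \<alpha> * (a \<bullet> ?er)" .
  have "transpose_mat B *\<^sub>v (transpose_mat ?Mc *\<^sub>v ?ec) = (transpose_mat B * transpose_mat ?Mc) *\<^sub>v ?ec"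
    using M_carrier B_carrier e by (intro assoc_mult_mat_vec[symmetric, of _ n N _ N]) auto
  also have "transpose_mat B * transpose_mat ?Mc = transpose_mat R * transpose_mat B"
    using M_carrier B_carrier R_carrier intertwining
    by (metis map_carrier_mat transpose_mult)
  also have "(transpose_mat R * transpose_mat B) *\<^sub>v ?ec = transpose_mat R *\<^sub>v (transpose_mat B *\<^sub>v ?ec)"
    using R_carrier B_carrier e by (intro assoc_mult_mat_vec[of _ n n _ N]) auto
  finally have snd_eq: "transpose_mat B *\<^sub>v (transpose_mat ?Mc *\<^sub>v ?ec) =
    transpose_mat R *\<^sub>v (transpose_mat B *\<^sub>v ?ec)" .
  show ?thesis unfolding period_def hom_r hom_c fst_eq snd_eq by simp
qed

lemma g0_carrier: "g0 \<in> carrier BG"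
  using g_zero_in_Bij[OF \<alpha>_pos R_carrier R_det] by (simp add: BijGroup_def)

lemma g0_mult_lattice_trans:
  assumes "e \<in> carrier_vec N"
  shows "g0 \<otimes>\<^bsub>BG\<^esub> lattice_trans e = lattice_trans (transpose_mat M *\<^sub>v e) \<otimes>\<^bsub>BG\<^esub> g0"
  using g_zero_mult_g_trans[OF \<alpha>_pos R_carrier R_det period_components[of e]]
  by (simp add: lattice_trans_def period_transpose[OF assms])

lemma lattice_trans_conj:
  assumes "e \<in> carrier_vec N"
  shows "g0 \<otimes>\<^bsub>BG\<^esub> lattice_trans e \<otimes>\<^bsub>BG\<^esub> inv\<^bsub>BG\<^esub> g0 = lattice_trans (transpose_mat M *\<^sub>v e)"
proof -
  have "g0 \<otimes>\<^bsub>BG\<^esub> lattice_trans e \<otimes>\<^bsub>BG\<^esub> inv\<^bsub>BG\<^esub> g0 =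
    lattice_trans (transpose_mat M *\<^sub>v e) \<otimes>\<^bsub>BG\<^esub> (g0 \<otimes>\<^bsub>BG\<^esub> inv\<^bsub>BG\<^esub> g0)"
    unfolding g0_mult_lattice_trans[OF assms]
    using g0_carrier lattice_trans_carrier by (simp only: lattice_hom.m_assoc lattice_hom.inv_closed)
  then show ?thesis using g0_carrier lattice_trans_carrier by simp
qed

text \<open>Since \<open>det M = 1\<close>, \<open>adj M\<close> is an integral inverse of \<open>M\<close>.\<close>
lemma lattice_trans_inv_conj:
  assumes e: "e \<in> carrier_vec N"
  shows "inv\<^bsub>BG\<^esub> g0 \<otimes>\<^bsub>BG\<^esub> lattice_trans e \<otimes>\<^bsub>BG\<^esub> g0 = lattice_trans (transpose_mat (adj_mat M) *\<^sub>v e)"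
proof -
  let ?f = "transpose_mat (adj_mat M) *\<^sub>v e"
  have adj: "adj_mat M \<in> carrier_mat N N" "adj_mat M * M = 1\<^sub>m N"
    using adj_mat[OF M_carrier] M_det by auto
  have f: "?f \<in> carrier_vec N" using adj(1) e by simp
  have "transpose_mat M *\<^sub>v ?f = (transpose_mat M * transpose_mat (adj_mat M)) *\<^sub>v e"
    using e M_carrier adj(1) by (intro assoc_mult_mat_vec[symmetric, of _ N N _ N]) auto
  also have "transpose_mat M * transpose_mat (adj_mat M) = transpose_mat (adj_mat M * M)"
    using M_carrier adj(1) by (intro transpose_mult[symmetric, of _ N N]) auto
  finally have "transpose_mat M *\<^sub>v ?f = e" using e unfolding adj(2) by simp
  then have conj: "g0 \<otimes>\<^bsub>BG\<^esub> lattice_trans ?f \<otimes>\<^bsub>BG\<^esub> inv\<^bsub>BG\<^esub> g0 = lattice_trans e"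
    using lattice_trans_conj[OF f] by simp
  have "inv\<^bsub>BG\<^esub> g0 \<otimes>\<^bsub>BG\<^esub> lattice_trans e \<otimes>\<^bsub>BG\<^esub> g0 =
    inv\<^bsub>BG\<^esub> g0 \<otimes>\<^bsub>BG\<^esub> (g0 \<otimes>\<^bsub>BG\<^esub> lattice_trans ?f \<otimes>\<^bsub>BG\<^esub> inv\<^bsub>BG\<^esub> g0) \<otimes>\<^bsub>BG\<^esub> g0"
    unfolding conj ..
  also have "\<dots> = lattice_trans ?f"
    using g0_carrier lattice_trans_carrier by (simp add: lattice_hom.m_assoc lattice_hom.inv_cancel_left)
  finally show ?thesis .
qed

sublocale normalized: normalizing_element BG "lattice_trans ` carrier_vec N" g0
proof (intro normalizing_element.intro normalizing_element_axioms.intro group_BijGroup)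
  show "subgroup (lattice_trans ` carrier_vec N) BG" by (rule lattice_hom.image_subgroup)
  show "g0 \<in> carrier BG" by (rule g0_carrier)
  show "g0 \<otimes>\<^bsub>BG\<^esub> t \<otimes>\<^bsub>BG\<^esub> inv\<^bsub>BG\<^esub> g0 \<in> lattice_trans ` carrier_vec N"
    "inv\<^bsub>BG\<^esub> g0 \<otimes>\<^bsub>BG\<^esub> t \<otimes>\<^bsub>BG\<^esub> g0 \<in> lattice_trans ` carrier_vec N"
    if "t \<in> lattice_trans ` carrier_vec N" for t
    using that M_carrier adj_mat(1)[OF M_carrier]
    by (auto simp: lattice_trans_conj lattice_trans_inv_conj)
qed

lemma commutator_g0_lattice_trans:
  assumes e: "e \<in> carrier_vec N"
  shows "g0 \<otimes>\<^bsub>BG\<^esub> lattice_trans e \<otimes>\<^bsub>BG\<^esub> inv\<^bsub>BG\<^esub> g0 \<otimes>\<^bsub>BG\<^esub> inv\<^bsub>BG\<^esub> lattice_trans e =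
    lattice_trans (transpose_mat (M - 1\<^sub>m N) *\<^sub>v e)"
proof -
  have "transpose_mat (M - 1\<^sub>m N) *\<^sub>v e = transpose_mat M *\<^sub>v e - e"
    using M_carrier e
    by (simp add: transpose_minus[of _ N N] minus_mult_distrib_mat_vec[of _ N N])
  also have "\<dots> = transpose_mat M *\<^sub>v e + - e"
    using M_carrier e by (intro eq_vecI) auto
  finally have "transpose_mat (M - 1\<^sub>m N) *\<^sub>v e = transpose_mat M *\<^sub>v e + - e" .
  then show ?thesis
    using M_carrier e
    by (simp add: lattice_trans_conj lattice_hom.hom_add lattice_hom.hom_uminus)
qed

theorem derived_subset_finite_index:
  assumes det_M_sub_one: "det (M - 1\<^sub>m N) \<noteq> 0"
  defines "H \<equiv> generate BG ((\<lambda>i. lattice_trans (unit_vec N i)) ` {..<N})"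
    and "G \<equiv> generate BG (insert g0 ((\<lambda>i. lattice_trans (unit_vec N i)) ` {..<N}))"
  shows "derived BG G \<subseteq> H \<and> finite (rcosets\<^bsub>BG\<lparr>carrier := H\<rparr>\<^esub> (derived BG G))"
proof
  have H: "H = lattice_trans ` carrier_vec N"
    unfolding H_def by (rule lattice_hom.image_eq_generate_unit_vecs[symmetric])
  have "G \<subseteq> generate BG (insert g0 H)"
    unfolding G_def H_def by (intro lattice_hom.mono_generate) (auto intro: generate.incl)
  then have "derived BG G \<subseteq> derived BG (generate BG (insert g0 H))"
    by (rule lattice_hom.mono_derived)
  also have "\<dots> \<subseteq> H" unfolding H by (rule normalized.derived_generate_insert_subset)
  finally show "derived BG G \<subseteq> H" .
  have G_carrier: "G \<subseteq> carrier BG"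
    unfolding G_def using g0_carrier lattice_trans_carrier
    by (intro lattice_hom.generate_incl) auto
  have "g0 \<in> G" unfolding G_def by (intro generate.incl) simp
  moreover have "H \<subseteq> G" unfolding G_def H_def by (intro lattice_hom.mono_generate) auto
  ultimately have "lattice_trans (transpose_mat (M - 1\<^sub>m N) *\<^sub>v e) \<in> derived BG G"
    if "e \<in> carrier_vec N" for e
    using that H unfolding derived_def commutator_g0_lattice_trans[OF that, symmetric]
    by (intro generate.incl) blast
  moreover have "M - 1\<^sub>m N \<in> carrier_mat N N" by (rule minus_carrier_mat) simp
  ultimately show "finite (rcosets\<^bsub>BG\<lparr>carrier := H\<rparr>\<^esub> (derived BG G))"
    unfolding H using det_M_sub_one
    by (intro lattice_hom.finite_rcosets_in_image[where D = "transpose_mat (M - 1\<^sub>m N)"]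
        lattice_hom.derived_is_subgroup G_carrier) (auto simp: det_transpose)
qed

end

theorem corollary2p6:
  fixes n :: nat and M :: "int mat" and \<alpha> :: real and a :: "real vec"
    and B :: "complex mat" and R :: "complex mat"
  defines "N \<equiv> 2 * n + 1"
  defines "Mc \<equiv> map_mat complex_of_int M"
  defines "W \<equiv> upper_gen_space Mc"
  defines "u \<equiv> (\<lambda>i. (complex_of_real (a $ i), vec n (\<lambda>j. B $$ (i, j))))"
  defines "G \<equiv> generate (BijGroup (upper_dom n))
                 (insert (g_zero n \<alpha> R) ((\<lambda>i. g_trans n (u i)) ` {..<N}))"
  defines "H \<equiv> generate (BijGroup (upper_dom n)) ((\<lambda>i. g_trans n (u i)) ` {..<N})"
  assumes n_pos: "n \<ge> 1"
    and M_carrier: "M \<in> carrier_mat N N" and M_det: "det M = 1"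
    and one_real_eig: "\<And>l. (eigenvalue Mc l \<and> Im l = 0) \<longleftrightarrow> l = complex_of_real \<alpha>"
    and \<alpha>_pos: "\<alpha> > 0" and \<alpha>_ne1: "\<alpha> \<noteq> 1"
    and \<alpha>_simple: "Polynomial.order (complex_of_real \<alpha>) (char_poly Mc) = 1"
    and a_carrier: "a \<in> carrier_vec N" and a_nz: "a \<noteq> 0\<^sub>v N"
    and a_eig: "map_mat real_of_int M *\<^sub>v a = \<alpha> \<cdot>\<^sub>v a"
    and B_carrier: "B \<in> carrier_mat N n"
    and B_in_W: "\<And>j. j < n \<Longrightarrow> col B j \<in> W"
    and B_indep: "\<And>c. c \<in> carrier_vec n \<Longrightarrow> B *\<^sub>v c = 0\<^sub>v N \<Longrightarrow> c = 0\<^sub>v n"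
    and B_span: "W \<subseteq> {B *\<^sub>v c | c. c \<in> carrier_vec n}"
    and R_carrier: "R \<in> carrier_mat n n"
    and R_def: "Mc * B = B * R"
  shows "derived (BijGroup (upper_dom n)) G \<subseteq> H \<and>
         finite (rcosets\<^bsub>(BijGroup (upper_dom n))\<lparr>carrier := H\<rparr>\<^esub> (derived (BijGroup (upper_dom n)) G))"
proof -
  (* n \<ge> 1, a \<noteq> 0, the simplicity of \<alpha> and the description of the columns of B by W
     are not needed. *)
  have Mc_carrier: "Mc \<in> carrier_mat N N" unfolding Mc_def using M_carrier by simp
  have "\<not> eigenvalue Mc 1" using one_real_eig[of 1] \<alpha>_ne1 by auto
  with M_carrier have det_M_sub_one: "det (M - 1\<^sub>m N) \<noteq> 0"
    unfolding Mc_def by (rule det_sub_one_nonzero)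
  have "det Mc \<noteq> 0" unfolding Mc_def by (simp add: of_int_hom.hom_det M_det)
  with Mc_carrier have "det R \<noteq> 0"
    using B_carrier B_indep R_carrier R_def by (rule det_nonzero_if_intertwined)
  then interpret lattice_translations n N M \<alpha> a B R
    using M_carrier M_det \<alpha>_pos a_carrier a_eig B_carrier R_carrier R_def
    unfolding Mc_def by unfold_locales
  have "period (unit_vec N i) = u i" if "i < N" for i
  proof -
    have "map_vec real_of_int (unit_vec N i) = unit_vec N i"
      "map_vec complex_of_int (unit_vec N i) = unit_vec N i"
      using that by (auto intro!: eq_vecI)
    moreover have "transpose_mat B *\<^sub>v unit_vec N i = vec n (\<lambda>j. B $$ (i, j))"
      using B_carrier that by (intro eq_vecI) auto
    ultimately show ?thesis
      using that a_carrier by (simp add: period_def u_def scalar_prod_right_unit)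
  qed
  then have "(\<lambda>i. g_trans n (u i)) ` {..<N} = (\<lambda>i. lattice_trans (unit_vec N i)) ` {..<N}"
    by (simp add: lattice_trans_def)
  then show ?thesis
    unfolding G_def H_def using derived_subset_finite_index[OF det_M_sub_one] by simp
qed

end
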